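(* Let $(\mathcal{X},d)$ be a complete separable metric space, $n \ge 2$, and let $P_X$ put mass $1/n$ on each of $n$ distinct points $x_1, \ldots, x_n \in \mathcal{X}$. Then $D(x_1; P_X) \leq 1 + \left(1 - \frac{1}{n} \right)\left(1 - \frac{3}{n} \right)$, with equality if and only if $d(x_i, x_j) = d(x_i, x_1) + d(x_1, x_j)$ for all distinct $i, j \in \{ 2, \ldots, n \}$.
   Context: Define $h: \mathcal{X}^3 \to \mathbb{R}$ by $h(x_1, x_2, x_3) := \mathbb{I}( x_3 \notin \{x_1, x_2\} ) \dfrac{ d^2(x_1, x_3) + d^2(x_2, x_3) - d^2(x_1, x_2) }{d(x_1, x_3)\, d(x_2, x_3) }$, where $h := 0$ when $x_3 \in \{x_1,x_2\}$. The metric spatial depth of $\mu \in \mathcal{X}$ with respect to a probability distribution $P_X$ on $\mathcal{X}$ is $D(\mu; P_X) := 1 - \frac{1}{2} \mathrm{E} \{ h(X_1, X_2, \mu) \}$, where $X_1, X_2 \sim P_X$ are independent. *)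

theory Defs
  imports "HOL-Probability.Probability"
begin

definition msd_h :: "'a::metric_space \<Rightarrow> 'a \<Rightarrow> 'a \<Rightarrow> real" where
  "msd_h x1 x2 x3 =
     (if x3 \<notin> {x1, x2}
      then ((dist x1 x3)\<^sup>2 + (dist x2 x3)\<^sup>2 - (dist x1 x2)\<^sup>2) / (dist x1 x3 * dist x2 x3)
      else 0)"

definition metric_spatial_depth :: "'a::metric_space \<Rightarrow> 'a pmf \<Rightarrow> real" where
  "metric_spatial_depth mu P =
     1 - 1/2 * measure_pmf.expectation (pair_pmf P P) (\<lambda>(x1, x2). msd_h x1 x2 mu)"

end

theory Submission
  imports Defs
begin

text \<open>Since h vanishes whenever the centre is one of its arguments and equals 2 on the
  diagonal, the double sum defining the depth of a support point c of a uniform distribution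
  on n points reduces to 2(n-1) plus the sum of h(a, b, c) over the (n-1)(n-2) ordered pairs of
  distinct points a, b other than c. Each of these terms is at least -2 by the triangle
  inequality, with equality exactly when c lies metrically between a and b, because
  h(a, b, c) + 2 = ((d(a,c) + d(c,b))^2 - d(a,b)^2) / (d(a,c) d(c,b)).\<close>

lemma pair_pmf_of_set:
  assumes "finite A" "A \<noteq> {}" "finite B" "B \<noteq> {}"
  shows "pair_pmf (pmf_of_set A) (pmf_of_set B) = pmf_of_set (A \<times> B)"
  by (rule pmf_eqI) (auto simp: pmf_pair assms indicator_def card_cartesian_product)

lemma expectation_pair_pmf_of_set:
  assumes "finite S" "S \<noteq> {}"
  shows "measure_pmf.expectation (pair_pmf (pmf_of_set S) (pmf_of_set S)) f
           = (\<Sum>a\<in>S. \<Sum>b\<in>S. f (a, b)) / (real (card S))\<^sup>2"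
  using assms
  by (simp add: pair_pmf_of_set integral_pmf_of_set card_cartesian_product
                sum.cartesian_product power2_eq_square)

lemma msd_h_eq_0_if_mem: "c \<in> {a, b} \<Longrightarrow> msd_h a b c = 0"
  by (simp add: msd_h_def)

lemma msd_h_diag: "c \<noteq> a \<Longrightarrow> msd_h a a c = 2"
  by (simp add: msd_h_def power2_eq_square)

lemma msd_h_add_two:
  assumes "c \<noteq> a" "c \<noteq> b"
  shows "msd_h a b c + 2
           = ((dist a c + dist c b)\<^sup>2 - (dist a b)\<^sup>2) / (dist a c * dist c b)"
  using assms by (simp add: msd_h_def dist_commute field_simps power2_eq_square)

lemma msd_h_ge_neg2: "-2 \<le> msd_h a b c"
proof (cases "c \<in> {a, b}")
  case False
  have "dist a b \<le> dist a c + dist c b"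
    by (rule dist_triangle)
  then have "(dist a b)\<^sup>2 \<le> (dist a c + dist c b)\<^sup>2"
    by (simp add: power_mono)
  then have "0 \<le> msd_h a b c + 2"
    using False by (simp add: msd_h_add_two)
  then show ?thesis by simp
qed (simp add: msd_h_eq_0_if_mem)

lemma msd_h_eq_neg2_iff:
  assumes "c \<noteq> a" "c \<noteq> b"
  shows "msd_h a b c = -2 \<longleftrightarrow> dist a b = dist a c + dist c b"
proof -
  have "msd_h a b c = -2 \<longleftrightarrow> msd_h a b c + 2 = 0" by linarith
  also have "\<dots> \<longleftrightarrow> (dist a b)\<^sup>2 = (dist a c + dist c b)\<^sup>2"
    using assms by (auto simp: msd_h_add_two)
  also have "\<dots> \<longleftrightarrow> dist a b = dist a c + dist c b"
    by (auto simp: power2_eq_iff_nonneg)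
  finally show ?thesis .
qed

lemma sum_msd_h_at_point:
  assumes "finite S" "c \<in> S"
  defines "R \<equiv> S - {c}"
  shows "(\<Sum>a\<in>S. \<Sum>b\<in>S. msd_h a b c)
           = 2 * real (card R) * (2 - real (card R))
             + (\<Sum>a\<in>R. \<Sum>b\<in>R - {a}. msd_h a b c + 2)"
proof -
  have fin: "finite R" using assms(1) by (simp add: R_def)
  have row: "(\<Sum>b\<in>R. msd_h a b c)
               = (4 - 2 * real (card R)) + (\<Sum>b\<in>R - {a}. msd_h a b c + 2)" if "a \<in> R" for a
  proof -
    have "card R \<ge> 1" using that fin by (auto simp: Suc_le_eq card_gt_0_iff)
    have "c \<noteq> a" using that by (auto simp: R_def)
    then have "(\<Sum>b\<in>R. msd_h a b c) = 2 + (\<Sum>b\<in>R - {a}. msd_h a b c)"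
      using that fin by (simp add: sum.remove msd_h_diag)
    also have "(\<Sum>b\<in>R - {a}. msd_h a b c)
                 = (\<Sum>b\<in>R - {a}. msd_h a b c + 2) - 2 * (real (card R) - 1)"
      using that fin \<open>card R \<ge> 1\<close> by (simp add: sum.distrib of_nat_diff)
    finally show ?thesis by simp
  qed
  have drop_c: "(\<Sum>a\<in>S. f a) = (\<Sum>a\<in>R. f a)" if "f c = 0" for f :: "'a \<Rightarrow> real"
    using assms(1,2) that by (simp add: sum.remove[of S c] R_def)
  have "(\<Sum>a\<in>S. \<Sum>b\<in>S. msd_h a b c) = (\<Sum>a\<in>R. \<Sum>b\<in>R. msd_h a b c)"
    by (simp add: drop_c msd_h_eq_0_if_mem)
  also have "\<dots> = (\<Sum>a\<in>R. (4 - 2 * real (card R)) + (\<Sum>b\<in>R - {a}. msd_h a b c + 2))"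
    using row by (rule sum.cong[OF refl])
  also have "\<dots> = 2 * real (card R) * (2 - real (card R))
                    + (\<Sum>a\<in>R. \<Sum>b\<in>R - {a}. msd_h a b c + 2)"
    by (simp only: sum.distrib sum_constant) (simp add: algebra_simps)
  finally show ?thesis .
qed

lemma sum_msd_h_add_two_nonneg: "0 \<le> (\<Sum>a\<in>R. \<Sum>b\<in>R - {a}. msd_h a b c + 2)"
  by (intro sum_nonneg) (smt (verit) msd_h_ge_neg2)

lemma sum_msd_h_add_two_eq_0_iff:
  assumes "finite R" "c \<notin> R"
  shows "(\<Sum>a\<in>R. \<Sum>b\<in>R - {a}. msd_h a b c + 2) = 0
           \<longleftrightarrow> (\<forall>a\<in>R. \<forall>b\<in>R. a \<noteq> b \<longrightarrow> dist a b = dist a c + dist c b)"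
proof -
  have nonneg: "0 \<le> msd_h a b c + 2" for a b
    using msd_h_ge_neg2[of a b c] by linarith
  have "(\<Sum>a\<in>R. \<Sum>b\<in>R - {a}. msd_h a b c + 2) = 0
          \<longleftrightarrow> (\<forall>a\<in>R. \<forall>b\<in>R - {a}. msd_h a b c + 2 = 0)"
    using assms(1) nonneg
    by (simp add: sum_nonneg_eq_0_iff sum_nonneg)
  also have "\<dots> \<longleftrightarrow> (\<forall>a\<in>R. \<forall>b\<in>R. a \<noteq> b \<longrightarrow> dist a b = dist a c + dist c b)"
  proof -
    have "msd_h a b c + 2 = 0 \<longleftrightarrow> dist a b = dist a c + dist c b" if "a \<in> R" "b \<in> R" for a b
    proof -
      have "msd_h a b c + 2 = 0 \<longleftrightarrow> msd_h a b c = -2" by linarith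
      also have "\<dots> \<longleftrightarrow> dist a b = dist a c + dist c b"
        using that assms(2) by (intro msd_h_eq_neg2_iff) auto
      finally show ?thesis .
    qed
    then show ?thesis by auto
  qed
  finally show ?thesis .
qed

lemma metric_spatial_depth_pmf_of_set:
  assumes "finite S" "c \<in> S"
  defines "n \<equiv> real (card S)"
  shows "metric_spatial_depth c (pmf_of_set S)
           = 1 + (1 - 1 / n) * (1 - 3 / n)
             - (\<Sum>a\<in>S - {c}. \<Sum>b\<in>S - {c} - {a}. msd_h a b c + 2) / (2 * n\<^sup>2)"
proof -
  have "S \<noteq> {}" using assms(2) by auto
  have n_pos: "n > 0" using assms(1,2) by (auto simp: n_def card_gt_0_iff)
  have card_R: "real (card (S - {c})) = n - 1"
    using assms(1,2) n_pos by (simp add: n_def of_nat_diff)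
  show ?thesis
    unfolding metric_spatial_depth_def
    using assms(1) \<open>S \<noteq> {}\<close> n_pos
    by (simp add: expectation_pair_pmf_of_set sum_msd_h_at_point[OF assms(1,2)] card_R
                  n_def[symmetric] field_simps power2_eq_square)
qed

theorem metric_spatial_depth_pmf_of_set_le:
  assumes "finite S" "c \<in> S"
  defines "n \<equiv> real (card S)"
  shows "metric_spatial_depth c (pmf_of_set S) \<le> 1 + (1 - 1 / n) * (1 - 3 / n)
       \<and> (metric_spatial_depth c (pmf_of_set S) = 1 + (1 - 1 / n) * (1 - 3 / n)
          \<longleftrightarrow> (\<forall>a\<in>S - {c}. \<forall>b\<in>S - {c}. a \<noteq> b \<longrightarrow> dist a b = dist a c + dist c b))"
proof -
  have "n > 0" using assms(1,2) by (auto simp: n_def card_gt_0_iff)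
  then show ?thesis
    using metric_spatial_depth_pmf_of_set[OF assms(1,2)]
      sum_msd_h_add_two_nonneg[where R = "S - {c}" and c = c]
      sum_msd_h_add_two_eq_0_iff[where R = "S - {c}" and c = c] assms(1)
    by (auto simp: n_def divide_nonneg_pos)
qed

theorem lemma2:
  fixes x :: "nat \<Rightarrow> 'a::polish_space" and n :: nat
  assumes "n \<ge> 2"
    and "inj_on x {1..n}"
  shows "metric_spatial_depth (x 1) (pmf_of_set (x ` {1..n}))
           \<le> 1 + (1 - 1 / real n) * (1 - 3 / real n)
       \<and> (metric_spatial_depth (x 1) (pmf_of_set (x ` {1..n}))
           = 1 + (1 - 1 / real n) * (1 - 3 / real n)
         \<longleftrightarrow> (\<forall>i\<in>{2..n}. \<forall>j\<in>{2..n}. i \<noteq> j \<longrightarrow>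
                dist (x i) (x j) = dist (x i) (x 1) + dist (x 1) (x j)))"
proof -
  have card: "card (x ` {1..n}) = n"
    using assms(2) by (simp add: card_image)
  have center: "x 1 \<in> x ` {1..n}"
    using assms(1) by simp
  have rest: "x ` {1..n} - {x 1} = x ` {2..n}"
    using assms by (force simp: inj_on_eq_iff)
  have inj_rest: "inj_on x {2..n}"
    using assms(2) by (rule inj_on_subset) auto
  have "(\<forall>a\<in>x ` {1..n} - {x 1}. \<forall>b\<in>x ` {1..n} - {x 1}.
            a \<noteq> b \<longrightarrow> dist a b = dist a (x 1) + dist (x 1) b)
        \<longleftrightarrow> (\<forall>i\<in>{2..n}. \<forall>j\<in>{2..n}. i \<noteq> j \<longrightarrow>
                dist (x i) (x j) = dist (x i) (x 1) + dist (x 1) (x j))"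
    unfolding rest using inj_rest by (auto simp: inj_on_eq_iff)
  then show ?thesis
    using metric_spatial_depth_pmf_of_set_le[OF finite_imageI[OF finite_atLeastAtMost] center]
    by (simp only: card)
qed

end
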